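(* For every integer $r\ge 1$, every line passing through two distinct points of $P_r$ has slope at most the slope of $\ell_r$; that is, among the lines passing through two points of $P_r$, $\ell_r$ is the line with the largest slope.
   Context: Define finite sets $P_r\subset\mathbb{Z}^2$ for integers $r\ge 0$ recursively: $P_0:=\{(0,0)\}$; for $r\ge 1$, $L_r:=P_{r-1}$, $R_r:=\{(x+\delta_r,\,y+\delta_r'):(x,y)\in L_r\}$ and $P_r:=L_r\cup R_r$, where $\delta_r:=3\cdot 4^{r-1}$ and $\delta_r':=(3r+1)\cdot 4^{r-1}$. For $r\ge 1$, let $p_r$ be the rightmost point (largest $x$-coordinate) of $L_r$, let $q_r$ be the leftmost point (smallest $x$-coordinate) of $R_r$, and let $\ell_r$ be the straight line through $p_r$ and $q_r$. *)

theory Defs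
  imports Complex_Main
begin

definition delta :: "nat \<Rightarrow> int" where
  "delta r = 3 * 4 ^ (r - 1)"

definition delta' :: "nat \<Rightarrow> int" where
  "delta' r = (3 * int r + 1) * 4 ^ (r - 1)"

fun P :: "nat \<Rightarrow> (int \<times> int) set" where
  "P 0 = {(0, 0)}"
| "P (Suc n) = P n \<union> (\<lambda>(x, y). (x + delta (Suc n), y + delta' (Suc n))) ` P n"

definition L :: "nat \<Rightarrow> (int \<times> int) set" where
  "L r = P (r - 1)"

definition R :: "nat \<Rightarrow> (int \<times> int) set" where
  "R r = (\<lambda>(x, y). (x + delta r, y + delta' r)) ` L r"

definition pt :: "nat \<Rightarrow> int \<times> int" where
  "pt r = (SOME p. p \<in> L r \<and> (\<forall>q\<in>L r. fst q \<le> fst p))"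

definition qt :: "nat \<Rightarrow> int \<times> int" where
  "qt r = (SOME q. q \<in> R r \<and> (\<forall>p\<in>R r. fst q \<le> fst p))"

definition slope :: "int \<times> int \<Rightarrow> int \<times> int \<Rightarrow> real" where
  "slope a b = real_of_int (snd b - snd a) / real_of_int (fst b - fst a)"

end

theory Submission
  imports Defs "HOL-Library.Product_Plus"
begin

text \<open>
  By induction on n, the points of P n have distinct x-coordinates in [0, 4^n - 1], the leftmost
  being (0, 0) and the rightmost (4^n - 1, n 4^n); so p_r and q_r are these extreme points of the
  two halves of P r.  For a direction c with positive x-coordinate, every segment of P r has slope
  at most that of c iff the additive form p \<mapsto> cross p c is nondecreasing along the x-order of
  P r.  Such a form, monotone on P n, stays monotone on P (n + 1) = P n \<union> (offset + P n) provided
  it does not decrease across the gap from the rightmost point of P n to the leftmost point of the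
  translate.  Taking c = q_r - p_r, the last gap, the theorem reduces to the fact that the slopes
  of the gaps are nondecreasing.
\<close>

definition offset :: "nat \<Rightarrow> int \<times> int" where
  "offset k = (delta k, delta' k)"

definition rightmost :: "nat \<Rightarrow> int \<times> int" where
  "rightmost n = (4 ^ n - 1, int n * 4 ^ n)"

definition gap :: "nat \<Rightarrow> int \<times> int" where
  "gap n = offset (Suc n) - rightmost n"

definition cross :: "int \<times> int \<Rightarrow> int \<times> int \<Rightarrow> int" where
  "cross p c = fst p * snd c - snd p * fst c"

definition monotone_along_fst :: "('a::linorder \<times> 'b \<Rightarrow> 'c::order) \<Rightarrow> ('a \<times> 'b) set \<Rightarrow> bool" where
  "monotone_along_fst f S \<longleftrightarrow> (\<forall>a\<in>S. \<forall>b\<in>S. fst a < fst b \<longrightarrow> f a \<le> f b)"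

lemma monotone_along_fst_le:
  assumes "monotone_along_fst f S" "inj_on fst S" "a \<in> S" "b \<in> S" "fst a \<le> fst b"
  shows "f a \<le> f b"
proof (cases "fst a = fst b")
  case True
  then show ?thesis using assms(2-4) by (auto dest: inj_onD)
next
  case False
  then show ?thesis using assms unfolding monotone_along_fst_def by auto
qed

lemma shift_eq_plus_offset: "(\<lambda>(x, y). (x + delta k, y + delta' k)) = (+) (offset k)"
  by (auto simp: offset_def add.commute)

lemma P_Suc: "P (Suc n) = P n \<union> (+) (offset (Suc n)) ` P n"
  by (simp add: shift_eq_plus_offset)

lemma R_Suc: "R (Suc n) = (+) (offset (Suc n)) ` P n"
  by (simp add: R_def L_def shift_eq_plus_offset)

lemma zero_in_P: "0 \<in> P n"
  by (induction n) (auto simp: zero_prod_def)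

lemma rightmost_Suc: "rightmost (Suc n) = offset (Suc n) + rightmost n"
  by (simp add: rightmost_def offset_def delta_def delta'_def algebra_simps)

lemma rightmost_in_P: "rightmost n \<in> P n"
proof (induction n)
  case 0
  then show ?case by (simp add: rightmost_def)
next
  case (Suc n)
  then show ?case unfolding P_Suc rightmost_Suc by blast
qed

lemma fst_offset_Suc: "fst (offset (Suc n)) = 3 * 4 ^ n"
  by (simp add: offset_def delta_def)

lemma fst_P_bounds: "a \<in> P n \<Longrightarrow> 0 \<le> fst a \<and> fst a \<le> 4 ^ n - 1"
proof (induction n arbitrary: a)
  case 0
  then show ?case by simp
next
  case (Suc n)
  from Suc.prems consider "a \<in> P n" | b where "b \<in> P n" "a = offset (Suc n) + b"
    unfolding P_Suc by blast
  then show ?case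
  proof cases
    case 1
    have "(4::int) ^ n \<le> 4 ^ Suc n" by simp
    with 1 Suc.IH show ?thesis by fastforce
  next
    case 2
    then show ?thesis using Suc.IH[of b] by (simp add: fst_offset_Suc)
  qed
qed

lemma fst_le_rightmost: "a \<in> P n \<Longrightarrow> fst a \<le> fst (rightmost n)"
  using fst_P_bounds by (simp add: rightmost_def)

lemma inj_on_fst_P: "inj_on fst (P n)"
proof (induction n)
  case 0
  then show ?case by simp
next
  case (Suc n)
  have left_of_right: "fst a < fst (offset (Suc n) + b)" if "a \<in> P n" "b \<in> P n" for a b
    using fst_P_bounds[OF that(1)] fst_P_bounds[OF that(2)] by (simp add: fst_offset_Suc)
  have "inj_on fst ((+) (offset (Suc n)) ` P n)"
    using Suc.IH by (auto simp: inj_on_def)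
  with Suc.IH show ?case
    unfolding P_Suc by (fastforce simp: inj_on_Un dest: left_of_right)
qed

lemma pt_Suc: "pt (Suc n) = rightmost n"
  unfolding pt_def L_def
proof (simp, rule some_equality)
  show "rightmost n \<in> P n \<and> (\<forall>q\<in>P n. fst q \<le> fst (rightmost n))"
    using rightmost_in_P fst_le_rightmost by blast
next
  fix p assume p: "p \<in> P n \<and> (\<forall>q\<in>P n. fst q \<le> fst p)"
  then have "fst p = fst (rightmost n)"
    using rightmost_in_P[of n] fst_le_rightmost[of p n] by force
  then show "p = rightmost n"
    using p inj_on_fst_P rightmost_in_P by (blast dest: inj_onD)
qed

lemma qt_Suc: "qt (Suc n) = offset (Suc n)"
proof -
  let ?R = "(+) (offset (Suc n)) ` P n"
  have mem: "offset (Suc n) \<in> ?R"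
    using zero_in_P[of n] by (metis add_0_right image_eqI)
  have least: "\<forall>p\<in>?R. fst (offset (Suc n)) \<le> fst p"
    using fst_P_bounds[of _ n] by auto
  have unique: "q = offset (Suc n)" if q: "q \<in> ?R" "\<forall>p\<in>?R. fst q \<le> fst p" for q
  proof -
    from q obtain a where a: "a \<in> P n" "q = offset (Suc n) + a" by blast
    have "fst q \<le> fst (offset (Suc n))"
      using q mem by blast
    then have "fst a = fst (0::int \<times> int)"
      using a fst_P_bounds[OF a(1)] by simp
    then have "a = 0"
      using inj_on_fst_P[of n] a(1) zero_in_P[of n] by (blast dest: inj_onD)
    then show ?thesis
      using a by simp
  qed
  show ?thesis
    unfolding qt_def R_Suc by (rule some_equality) (use mem least unique in blast)+
qed

lemma monotone_along_fst_P_bounds: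
  assumes "monotone_along_fst f (P n)" "a \<in> P n"
  shows "f 0 \<le> f a" "f a \<le> f (rightmost n)"
  using assms monotone_along_fst_le[OF assms(1) inj_on_fst_P]
    zero_in_P rightmost_in_P fst_P_bounds fst_le_rightmost by auto

lemma monotone_along_fst_P_Suc:
  fixes f :: "int \<times> int \<Rightarrow> int"
  assumes add: "\<And>a b. f (a + b) = f a + f b"
    and mono: "monotone_along_fst f (P n)"
    and step: "f (rightmost n) \<le> f (offset (Suc n))"
  shows "monotone_along_fst f (P (Suc n))"
  unfolding monotone_along_fst_def
proof (intro ballI impI)
  fix a b assume a: "a \<in> P (Suc n)" and b: "b \<in> P (Suc n)" and lt: "fst a < fst b"
  have "f 0 = 0"
    using add[of 0 0] by simp
  then have bounds: "0 \<le> f c" "f c \<le> f (rightmost n)" if "c \<in> P n" for c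
    using monotone_along_fst_P_bounds[OF mono that] by simp_all
  have fst_shift: "fst (offset (Suc n) + c) = 3 * 4 ^ n + fst c" for c
    by (simp add: fst_offset_Suc)
  consider "a \<in> P n" "b \<in> P n"
    | a' where "a' \<in> P n" "a = offset (Suc n) + a'" "b \<in> P n"
    | b' where "a \<in> P n" "b' \<in> P n" "b = offset (Suc n) + b'"
    | a' b' where "a' \<in> P n" "a = offset (Suc n) + a'" "b' \<in> P n" "b = offset (Suc n) + b'"
    using a b unfolding P_Suc by blast
  then show "f a \<le> f b"
  proof cases
    case 1
    then show ?thesis using mono lt by (simp add: monotone_along_fst_def)
  next
    case 2
    then show ?thesis
      using lt fst_P_bounds[of a' n] fst_P_bounds[of b n] fst_shift[of a'] by simp
  next
    case 3
    then show ?thesis using bounds[of a] bounds[of b'] step add by simp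
  next
    case 4
    then show ?thesis using mono lt add by (simp add: monotone_along_fst_def)
  qed
qed

lemma monotone_along_fst_P:
  fixes f :: "int \<times> int \<Rightarrow> int"
  assumes add: "\<And>a b. f (a + b) = f a + f b"
    and steps: "\<And>k. k < n \<Longrightarrow> f (rightmost k) \<le> f (offset (Suc k))"
  shows "monotone_along_fst f (P n)"
  using steps
proof (induction n)
  case 0
  then show ?case by (simp add: monotone_along_fst_def)
next
  case (Suc n)
  then show ?case using monotone_along_fst_P_Suc[OF add] by simp
qed

lemma cross_add: "cross (a + b) c = cross a c + cross b c"
  by (simp add: cross_def algebra_simps)

lemma gap_eq: "gap n = (2 * 4 ^ n + 1, (2 * int n + 4) * 4 ^ n)"
  by (simp add: gap_def offset_def rightmost_def delta_def delta'_def algebra_simps)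

lemma cross_gap_nonneg:
  assumes "j \<le> n"
  shows "0 \<le> cross (gap j) (gap n)"
proof -
  have pow: "(0::int) < 4 ^ j" "(4::int) ^ j \<le> 4 ^ n"
    using assms by (auto intro: power_increasing)
  have "cross (gap j) (gap n)
      = 4 * 4 ^ j * 4 ^ n * (int n - int j) + ((2 * int n + 4) * 4 ^ n - (2 * int j + 4) * 4 ^ j)"
    by (simp add: cross_def gap_eq algebra_simps)
  moreover have "(2 * int j + 4) * 4 ^ j \<le> (2 * int n + 4) * 4 ^ n"
    using assms pow by (intro mult_mono) auto
  ultimately show ?thesis
    using assms pow by simp
qed

lemma slope_commute: "slope a b = slope b a"
proof -
  have "(x::real) / y = (- x) / (- y)" for x y by simp
  then show ?thesis unfolding slope_def by (metis minus_diff_eq of_int_minus)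
qed

lemma slope_le_of_cross:
  assumes "fst a < fst b" "0 < fst c" "cross a c \<le> cross b c"
  shows "slope a b \<le> real_of_int (snd c) / real_of_int (fst c)"
proof -
  have "(snd b - snd a) * fst c \<le> (fst b - fst a) * snd c"
    using assms(3) by (simp add: cross_def algebra_simps)
  then have "real_of_int (snd b - snd a) * real_of_int (fst c)
      \<le> real_of_int (fst b - fst a) * real_of_int (snd c)"
    by (metis of_int_le_iff of_int_mult)
  then show ?thesis
    using assms(1,2) by (simp add: slope_def divide_simps mult.commute)
qed

lemma slope_pt_qt: "slope (pt (Suc n)) (qt (Suc n)) = real_of_int (snd (gap n)) / real_of_int (fst (gap n))"
  by (simp add: slope_def pt_Suc qt_Suc gap_def)

theorem lemma1:
  fixes r :: nat
  assumes "r \<ge> 1"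
  shows "\<forall>a\<in>P r. \<forall>b\<in>P r. a \<noteq> b \<longrightarrow>
           fst a \<noteq> fst b \<and> slope a b \<le> slope (pt r) (qt r)"
proof -
  obtain m where r: "r = Suc m" using assms by (cases r) auto
  let ?f = "\<lambda>p. cross p (gap m)"
  have mono: "monotone_along_fst ?f (P r)"
  proof (rule monotone_along_fst_P)
    fix k assume "k < r"
    then show "?f (rightmost k) \<le> ?f (offset (Suc k))"
      using cross_gap_nonneg[of k m] cross_add[of "rightmost k" "gap k"] r
      by (simp add: gap_def)
  qed (rule cross_add)
  have ordered: "slope a b \<le> slope (pt r) (qt r)" if "a \<in> P r" "b \<in> P r" "fst a < fst b" for a b
    using slope_le_of_cross[of a b "gap m"] mono that
    by (simp add: monotone_along_fst_def slope_pt_qt r gap_eq)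
  show ?thesis
  proof (intro ballI impI)
    fix a b assume ab: "a \<in> P r" "b \<in> P r" "a \<noteq> b"
    then have "fst a \<noteq> fst b" using inj_on_fst_P by (blast dest: inj_onD)
    then show "fst a \<noteq> fst b \<and> slope a b \<le> slope (pt r) (qt r)"
      using ordered[of a b] ordered[of b a] ab slope_commute[of a b] by (cases "fst a < fst b") auto
  qed
qed

end
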